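(* Let $F$ be the distribution function of a random variable $X\ge0$ with $EX=\infty$ such that $F(0)=0$, $F(2)=0.4$, $F(4)=0.8$ and $F(3)<0.48$. Then $F\notin\mathcal{D}^-$.
   Context: For real random variables, $X \le_{st} Y$ means $P(X\le t)\ge P(Y\le t)$ for all $t\in\mathbb{R}$. A distribution function $F_X$ belongs to $\mathcal{D}^-$ if for every $n\in\mathbb{N}$, all $\theta_1,\dots,\theta_n\ge 0$ with $\sum_{i=1}^n\theta_i=1$, and i.i.d. random variables $X_1,\dots,X_n$ with distribution $F_X$, we have $X_1\le_{st}\sum_{i=1}^n\theta_iX_i$. *)

theory Defs
  imports "HOL-Probability.Probability"
begin

text \<open>Distribution of the weighted sum \<open>\<Sum>i=1..n. \<theta> i * X i\<close> of i.i.d. random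
  variables \<open>X 1, ..., X n\<close> with common law \<open>M\<close>: we model the i.i.d. family
  canonically on the product space \<open>PiM {1..n} (\<lambda>_. M)\<close>.\<close>

definition wsum_le_prob :: "real measure \<Rightarrow> nat \<Rightarrow> (nat \<Rightarrow> real) \<Rightarrow> real \<Rightarrow> real" where
  "wsum_le_prob M n \<theta> t =
     measure (PiM {1..n} (\<lambda>_. M))
       {x \<in> space (PiM {1..n} (\<lambda>_. M)). (\<Sum>i=1..n. \<theta> i * x i) \<le> t}"

text \<open>\<open>F \<in> D\<^sup>-\<close>, expressed for the law \<open>M\<close> with distribution function \<open>cdf M\<close>:
  \<open>X\<^sub>1 \<le>\<^sub>s\<^sub>t \<Sum>\<theta>\<^sub>iX\<^sub>i\<close> means \<open>P(X\<^sub>1 \<le> t) \<ge> P(\<Sum>\<theta>\<^sub>iX\<^sub>i \<le> t)\<close> for all t.\<close>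

definition in_D_minus :: "real measure \<Rightarrow> bool" where
  "in_D_minus M \<longleftrightarrow>
     (\<forall>n::nat. n \<ge> 1 \<longrightarrow> (\<forall>\<theta>::nat \<Rightarrow> real.
        (\<forall>i\<in>{1..n}. \<theta> i \<ge> 0) \<and> (\<Sum>i=1..n. \<theta> i) = 1 \<longrightarrow>
        (\<forall>t::real. cdf M t \<ge> wsum_le_prob M n \<theta> t)))"

end

theory Submission
  imports Defs
begin

text \<open>Take two copies and equal weights. With \<open>a = 2\<close>, \<open>b = 4\<close>, the event
  \<open>(X\<^sub>1 + X\<^sub>2)/2 \<le> 3\<close> contains the disjoint boxes \<open>{X\<^sub>1 \<le> 2, X\<^sub>2 \<le> 4}\<close> and
  \<open>{2 < X\<^sub>1 \<le> 4, X\<^sub>2 \<le> 2}\<close>, of probability \<open>0.4 \<cdot> 0.8 + 0.4 \<cdot> 0.4 = 0.48 > F(3)\<close>.\<close>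

lemma measure_PiM_PiE:
  assumes "prob_space M" "finite I" "\<And>i. i \<in> I \<Longrightarrow> A i \<in> sets M"
  shows "measure (PiM I (\<lambda>_. M)) (Pi\<^sub>E I A) = (\<Prod>i\<in>I. measure M (A i))"
proof -
  interpret finite_product_prob_space "\<lambda>_. M" I
    using assms(1,2) prob_space_imp_sigma_finite[OF assms(1)]
    by (simp add: finite_product_prob_space_def finite_product_sigma_finite_def
        finite_product_sigma_finite_axioms_def product_sigma_finite_def
        product_prob_space_def product_prob_space_axioms_def)
  show ?thesis
    using assms(3) by (rule finite_measure_PiM_emb)
qed

lemma (in real_distribution) wsum_le_prob_midpoint_ge:
  assumes "a \<le> b"
  shows "cdf M a * cdf M b + (cdf M b - cdf M a) * cdf M a
           \<le> wsum_le_prob M 2 (\<lambda>_. 1/2) ((a + b) / 2)"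
proof -
  define P where "P = PiM {1..2::nat} (\<lambda>_. M)"
  interpret P: prob_space P
    unfolding P_def by (intro prob_space_PiM) (simp add: prob_space_axioms)
  define S where "S = {x \<in> space P. (\<Sum>i=1..2. 1/2 * x i) \<le> (a + b) / 2}"
  define A where "A = Pi\<^sub>E {1..2::nat} (\<lambda>i. if i = 1 then {..a} else {..b})"
  define B where "B = Pi\<^sub>E {1..2::nat} (\<lambda>i. if i = 1 then {a<..b} else {..a})"
  have sum_two: "(\<Sum>i=1..2. 1/2 * x i) = (x 1 + x 2) / 2" for x :: "nat \<Rightarrow> real"
    by (simp add: numeral_2_eq_2)
  have space_P: "space P = Pi\<^sub>E {1..2::nat} (\<lambda>_. UNIV)"
    unfolding P_def by (simp add: space_PiM)
  have "x 1 \<le> a \<and> x 2 \<le> b" if "x \<in> A" for x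
    using PiE_mem[OF that[unfolded A_def], of 1] PiE_mem[OF that[unfolded A_def], of 2] by auto
  moreover have "a < x 1 \<and> x 1 \<le> b \<and> x 2 \<le> a" if "x \<in> B" for x
    using PiE_mem[OF that[unfolded B_def], of 1] PiE_mem[OF that[unfolded B_def], of 2] by auto
  moreover have "A \<subseteq> space P" "B \<subseteq> space P"
    unfolding A_def B_def space_P by auto
  ultimately have "A \<union> B \<subseteq> S" and disjoint: "A \<inter> B = {}"
    unfolding S_def sum_two by force+
  have events: "A \<in> P.events" "B \<in> P.events" "S \<in> P.events"
    unfolding A_def B_def S_def P_def by (auto intro!: sets_PiM_I_finite) measurable
  have "measure M {a<..b} = cdf M b - cdf M a"
  proof -
    have "{a<..b} = {..b} - {..a}" by auto
    with \<open>a \<le> b\<close> show ?thesis by (simp add: finite_measure_Diff cdf_def)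
  qed
  then have "P.prob A = cdf M a * cdf M b" "P.prob B = (cdf M b - cdf M a) * cdf M a"
    unfolding A_def B_def P_def
    by (subst measure_PiM_PiE; simp add: prob_space_axioms numeral_2_eq_2 cdf_def)+
  moreover have "P.prob (A \<union> B) = P.prob A + P.prob B"
    using events disjoint by (simp add: P.finite_measure_Union)
  moreover have "P.prob (A \<union> B) \<le> P.prob S"
    using \<open>A \<union> B \<subseteq> S\<close> events by (intro P.finite_measure_mono) auto
  ultimately show ?thesis
    unfolding wsum_le_prob_def S_def P_def by simp
qed

theorem mainTheorem11:
  fixes M :: "real measure"
  assumes "real_distribution M"
    and "AE x in M. x \<ge> 0"
    and "(\<integral>\<^sup>+ x. ennreal x \<partial>M) = \<infinity>"
    and "cdf M 0 = 0"
    and "cdf M 2 = 0.4"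
    and "cdf M 4 = 0.8"
    and "cdf M 3 < 0.48"
  shows "\<not> in_D_minus M"
proof
  assume "in_D_minus M"
  then have "wsum_le_prob M 2 (\<lambda>_. 1/2) 3 \<le> cdf M 3"
    unfolding in_D_minus_def by (auto simp: numeral_2_eq_2)
  moreover have "0.48 \<le> wsum_le_prob M 2 (\<lambda>_. 1/2) ((2 + 4) / 2)"
    using real_distribution.wsum_le_prob_midpoint_ge[OF assms(1), of 2 4] assms(5,6) by simp
  ultimately show False
    using assms(7) by simp
qed

end
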